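(* Let $G=(V,E)$ be a finite simple undirected graph and let $\sigma=(\lambda_1,\lambda_2,\ldots,\lambda_m)$ be a coding sequence of $G$. Write $V=\{v_1,\ldots,v_m\}$, where $v_i$ corresponds to $\lambda_i$, and put $\mu(v_i)=\lambda_i$. Let $\{p_1,\ldots,p_k\}$ be the set of all distinct prime factors of $\lambda(\sigma)$, and suppose $G$ has $s\ge 0$ isolated vertices (so that $\lambda_1=\cdots=\lambda_s=1$ correspond to the isolated vertices $v_1,\ldots,v_s$). Define $S_j=\{v_j\}$ for $j=1,\ldots,s$ and $S_{s+j}=\{v_i\in V : p_j \text{ divides } \lambda_i\}$ for $j=1,\ldots,k$. Then $S=\{S_j : j=1,\ldots,s+k\}$ is a total clique covering of $G$. Moreover, for any vertex $v$ and any nonempty set $\{j_1,\ldots,j_r\}\subseteq\{1,\ldots,k\}$, we have $v\in S_{s+j_1}\cap\cdots\cap S_{s+j_r}$ and $v\notin S_{s+j}$ for all $j\in\{1,\ldots,k\}\setminus\{j_1,\ldots,j_r\}$ if and only if $\mu(v)=p_{j_1}p_{j_2}\cdots p_{j_r}$; and $v\in S_1\cup\cdots\cup S_s$ if and only if $\mu(v)=1$.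
   Context: All graphs are finite, simple and undirected. For a finite sequence $\sigma=(a_1,\ldots,a_m)$ of positive integers, $G[\sigma]$ is the graph with vertices $v_1,\ldots,v_m$ ($a_i$ is the label of $v_i$) where $v_iv_j$ is an edge iff $i\ne j$ and $\gcd(a_i,a_j)>1$. A coding sequence of a graph $G$ with $s\ge 0$ isolated vertices is defined as follows: if $G$ has a single vertex, $\sigma=(1)$; otherwise let $G_1$ be $G$ with its isolated vertices deleted, let $\sigma_1$ be a finite non-decreasing sequence of square-free integers greater than $1$ with $G_1\cong G[\sigma_1]$, and let $\sigma$ be $\sigma_1$ prefixed by $s$ entries equal to $1$; then $G\cong G[\sigma]$, the vertex with label $1$ being the isolated vertices. Entries greater than $1$ are non-trivial, and $\lambda(\sigma)$ denotes the least common multiple of the non-trivial entries of $\sigma$. A clique is a set of pairwise adjacent vertices. A set $S$ of cliques of $G$ is a total clique covering of $G$ if every vertex lies in some member of $S$ and every edge has both endpoints in some member of $S$. *)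

theory Defs
  imports Main "HOL-Computational_Algebra.Primes" "HOL-Computational_Algebra.Squarefree"
begin

definition simple_graph :: "'a set \<Rightarrow> ('a \<Rightarrow> 'a \<Rightarrow> bool) \<Rightarrow> bool" where
  "simple_graph V E \<longleftrightarrow> finite V \<and> (\<forall>x y. E x y \<longrightarrow> x \<in> V \<and> y \<in> V)
     \<and> (\<forall>x y. E x y \<longrightarrow> E y x) \<and> (\<forall>x. \<not> E x x)"

definition isolated_vertices :: "'a set \<Rightarrow> ('a \<Rightarrow> 'a \<Rightarrow> bool) \<Rightarrow> 'a set" where
  "isolated_vertices V E = {x \<in> V. \<forall>y \<in> V. \<not> E x y}"

text \<open>The sequence sigma = (lam 1, ..., lam m) is a coding sequence of the graph (V,E),
  with vertex v_i = vtx i carrying label lam i, and s the number of isolated vertices: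
  vtx is an isomorphism from G[sigma] onto (V,E), the first s labels are 1 (these are
  the isolated vertices), and the remaining labels form a non-decreasing sequence of
  square-free integers greater than 1.\<close>
definition coding_seq ::
  "'a set \<Rightarrow> ('a \<Rightarrow> 'a \<Rightarrow> bool) \<Rightarrow> nat \<Rightarrow> (nat \<Rightarrow> nat) \<Rightarrow> (nat \<Rightarrow> 'a) \<Rightarrow> nat \<Rightarrow> bool" where
  "coding_seq V E m lam vtx s \<longleftrightarrow>
     bij_betw vtx {1..m} V
   \<and> (\<forall>i\<in>{1..m}. \<forall>j\<in>{1..m}. E (vtx i) (vtx j) \<longleftrightarrow> i \<noteq> j \<and> gcd (lam i) (lam j) > 1)
   \<and> s = card (isolated_vertices V E)
   \<and> (\<forall>i\<in>{1..m}. i \<le> s \<longrightarrow> lam i = 1)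
   \<and> (\<forall>i\<in>{1..m}. s < i \<longrightarrow> lam i > 1 \<and> squarefree (lam i))
   \<and> (\<forall>i j. s < i \<longrightarrow> i \<le> j \<longrightarrow> j \<le> m \<longrightarrow> lam i \<le> lam j)"

definition seq_lcm :: "nat \<Rightarrow> (nat \<Rightarrow> nat) \<Rightarrow> nat" where
  "seq_lcm m lam = Lcm (lam ` {i \<in> {1..m}. lam i > 1})"

definition is_clique :: "'a set \<Rightarrow> ('a \<Rightarrow> 'a \<Rightarrow> bool) \<Rightarrow> 'a set \<Rightarrow> bool" where
  "is_clique V E C \<longleftrightarrow> C \<subseteq> V \<and> (\<forall>x\<in>C. \<forall>y\<in>C. x \<noteq> y \<longrightarrow> E x y)"

definition total_clique_covering :: "'a set \<Rightarrow> ('a \<Rightarrow> 'a \<Rightarrow> bool) \<Rightarrow> 'a set set \<Rightarrow> bool" where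
  "total_clique_covering V E S \<longleftrightarrow>
     (\<forall>C\<in>S. is_clique V E C)
   \<and> (\<forall>x\<in>V. \<exists>C\<in>S. x \<in> C)
   \<and> (\<forall>x y. E x y \<longrightarrow> (\<exists>C\<in>S. x \<in> C \<and> y \<in> C))"

definition cover_set :: "nat \<Rightarrow> (nat \<Rightarrow> nat) \<Rightarrow> (nat \<Rightarrow> 'a) \<Rightarrow> nat \<Rightarrow> (nat \<Rightarrow> nat) \<Rightarrow> nat \<Rightarrow> 'a set" where
  "cover_set m lam vtx s p j =
     (if j \<le> s then {vtx j} else {vtx i | i. i \<in> {1..m} \<and> p (j - s) dvd lam i})"

end

theory Submission
  imports Defs
begin

text \<open>A label is squarefree, so it is the product of its prime factors, and these all divide
  \<open>\<lambda>(\<sigma>)\<close>; hence the pattern of sets \<open>S\<^sub>s\<^sub>+\<^sub>j\<close> containing a vertex determines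
  its label.  The set \<open>S\<^sub>s\<^sub>+\<^sub>j\<close> is a clique because any two labels divisible
  by \<open>p\<^sub>j\<close> have a gcd greater than 1, and conversely every edge joins two labels
  sharing a prime factor \<open>p\<^sub>j\<close>, hence lies in \<open>S\<^sub>s\<^sub>+\<^sub>j\<close>.\<close>

lemma prime_factors_prod_primes:
  fixes P :: "nat set"
  assumes "finite P" "\<forall>q\<in>P. prime q"
  shows "prime_factors (\<Prod>P) = P"
proof -
  have "0 \<notin> id ` P" using assms(2) by auto
  then have "prime_factors (prod id P) = \<Union>((prime_factors \<circ> id) ` P)"
    using prime_factors_prod[OF assms(1)] by blast
  also have "\<dots> = P" using assms(2) by (auto simp: prime_prime_factors)
  finally show ?thesis by simp
qed

lemma squarefree_eq_prod_prime_factors: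
  fixes n :: nat
  assumes "n > 0" "squarefree n"
  shows "n = \<Prod>(prime_factors n)"
proof -
  have multiplicity_1: "\<forall>q\<in>prime_factors n. multiplicity q n = 1"
    using assms squarefree_factorial_semiring'[of n] by auto
  have "n = (\<Prod>q \<in> prime_factors n. q ^ multiplicity q n)"
    using prime_factorization_nat[OF assms(1)] .
  also have "\<dots> = \<Prod>(prime_factors n)"
    by (rule prod.cong) (auto simp: multiplicity_1)
  finally show ?thesis .
qed

lemma squarefree_eq_prod_primes_iff:
  fixes n :: nat and P :: "nat set"
  assumes "n > 0" "squarefree n" "finite P" "\<forall>q\<in>P. prime q"
  shows "n = \<Prod>P \<longleftrightarrow> prime_factors n = P"
  using squarefree_eq_prod_prime_factors[OF assms(1,2)] prime_factors_prod_primes[OF assms(3,4)]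
  by metis

lemma squarefree_eq_prod_iff_prime_divisors:
  fixes n :: nat and p :: "nat \<Rightarrow> nat"
  assumes "n > 0" "squarefree n" "finite K" "inj_on p K" "\<forall>j\<in>K. prime (p j)"
    and "prime_factors n \<subseteq> p ` K" "J \<subseteq> K"
  shows "((\<forall>j\<in>J. p j dvd n) \<and> (\<forall>j\<in>K - J. \<not> p j dvd n)) \<longleftrightarrow> n = (\<Prod>j\<in>J. p j)"
proof -
  have prime_factor_iff: "\<And>j. j \<in> K \<Longrightarrow> p j \<in> prime_factors n \<longleftrightarrow> p j dvd n"
    using assms(1,5) by (auto simp: in_prime_factors_iff)
  have "((\<forall>j\<in>J. p j dvd n) \<and> (\<forall>j\<in>K - J. \<not> p j dvd n)) \<longleftrightarrow> prime_factors n = p ` J"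
  proof
    assume pattern: "(\<forall>j\<in>J. p j dvd n) \<and> (\<forall>j\<in>K - J. \<not> p j dvd n)"
    show "prime_factors n = p ` J"
    proof (intro equalityI subsetI)
      fix q assume q: "q \<in> prime_factors n"
      then obtain j where "j \<in> K" "q = p j" using assms(6) by blast
      with q pattern prime_factor_iff show "q \<in> p ` J" by blast
    next
      fix q assume "q \<in> p ` J"
      with pattern prime_factor_iff assms(7) show "q \<in> prime_factors n" by blast
    qed
  next
    assume factors: "prime_factors n = p ` J"
    have "p j dvd n \<longleftrightarrow> j \<in> J" if "j \<in> K" for j
      using that factors prime_factor_iff[OF that] inj_on_image_mem_iff[OF assms(4) that assms(7)]
      by simp
    with assms(7) show "(\<forall>j\<in>J. p j dvd n) \<and> (\<forall>j\<in>K - J. \<not> p j dvd n)" by blast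
  qed
  also have "\<dots> \<longleftrightarrow> n = \<Prod>(p ` J)"
  proof -
    have "finite (p ` J)" "\<forall>q\<in>p ` J. prime q"
      using assms(5,7) finite_subset[OF assms(7,3)] by auto
    then show ?thesis using squarefree_eq_prod_primes_iff[OF assms(1,2)] by blast
  qed
  also have "\<Prod>(p ` J) = (\<Prod>j\<in>J. p j)"
    using prod.reindex[OF inj_on_subset[OF assms(4,7)], of id] by simp
  finally show ?thesis .
qed

lemma one_less_gcd_iff_common_prime_divisor:
  fixes a b :: nat
  assumes "a \<noteq> 0"
  shows "1 < gcd a b \<longleftrightarrow> (\<exists>q. prime q \<and> q dvd a \<and> q dvd b)"
proof
  assume "1 < gcd a b"
  then have "gcd a b \<noteq> 1" by simp
  then obtain q where "prime q" "q dvd gcd a b" using prime_factor_nat by blast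
  then show "\<exists>q. prime q \<and> q dvd a \<and> q dvd b" by auto
next
  assume "\<exists>q. prime q \<and> q dvd a \<and> q dvd b"
  then obtain q where q: "prime q" "q dvd gcd a b" by auto
  have "q \<le> gcd a b" using q(2) assms by (simp add: dvd_imp_le)
  then show "1 < gcd a b" using prime_gt_1_nat[OF q(1)] by linarith
qed

locale coding_sequence =
  fixes V :: "'a set" and E :: "'a \<Rightarrow> 'a \<Rightarrow> bool"
    and m :: nat and lam :: "nat \<Rightarrow> nat" and vtx :: "nat \<Rightarrow> 'a" and s :: nat
  assumes coding: "coding_seq V E m lam vtx s"
begin

lemma vtx_bij: "bij_betw vtx {1..m} V"
  using coding by (simp add: coding_seq_def)

lemma vtx_inj: "inj_on vtx {1..m}"
  using vtx_bij by (simp add: bij_betw_def)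

lemma vtx_image: "vtx ` {1..m} = V"
  using vtx_bij by (simp add: bij_betw_def)

lemma edge_iff:
  "i \<in> {1..m} \<Longrightarrow> j \<in> {1..m} \<Longrightarrow> E (vtx i) (vtx j) \<longleftrightarrow> i \<noteq> j \<and> 1 < gcd (lam i) (lam j)"
  using coding by (simp add: coding_seq_def)

lemma isolated_count_le: "s \<le> m"
proof -
  have "finite V" using vtx_bij bij_betw_finite by blast
  then have "card (isolated_vertices V E) \<le> card V"
    by (rule card_mono) (auto simp: isolated_vertices_def)
  then show ?thesis
    using coding bij_betw_same_card[OF vtx_bij] by (simp add: coding_seq_def)
qed

lemma label_cases:
  "i \<in> {1..m} \<Longrightarrow> (i \<le> s \<and> lam i = 1) \<or> (s < i \<and> 1 < lam i \<and> squarefree (lam i))"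
  using coding unfolding coding_seq_def by (cases "i \<le> s") auto

lemma label_eq_1_iff: "i \<in> {1..m} \<Longrightarrow> lam i = 1 \<longleftrightarrow> i \<le> s"
  using label_cases by force

lemma label_pos: "i \<in> {1..m} \<Longrightarrow> 0 < lam i"
  using label_cases by force

lemma label_squarefree: "i \<in> {1..m} \<Longrightarrow> squarefree (lam i)"
  using label_cases by force

lemma seq_lcm_nonzero: "seq_lcm m lam \<noteq> 0"
  unfolding seq_lcm_def by (subst Lcm_0_iff_nat) auto

lemma label_dvd_seq_lcm: "i \<in> {1..m} \<Longrightarrow> lam i dvd seq_lcm m lam"
  using label_pos[of i] unfolding seq_lcm_def
  by (cases "lam i = 1") (auto intro: dvd_Lcm)

lemma prime_factors_label_subset:
  "i \<in> {1..m} \<Longrightarrow> prime_factors (lam i) \<subseteq> prime_factors (seq_lcm m lam)"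
  using label_dvd_seq_lcm seq_lcm_nonzero by (intro dvd_prime_factors)

lemma vtx_in_cover_set_iff:
  assumes "i \<in> {1..m}" "0 < j"
  shows "vtx i \<in> cover_set m lam vtx s p (s + j) \<longleftrightarrow> p j dvd lam i"
proof -
  have "vtx i \<in> cover_set m lam vtx s p (s + j) \<longleftrightarrow>
      (\<exists>i'\<in>{1..m}. vtx i = vtx i' \<and> p j dvd lam i')"
    using assms(2) by (auto simp: cover_set_def)
  also have "\<dots> \<longleftrightarrow> p j dvd lam i"
    using vtx_inj assms(1) by (metis inj_on_eq_iff)
  finally show ?thesis .
qed

lemma vtx_in_isolated_cover_sets_iff:
  assumes "i \<in> {1..m}"
  shows "vtx i \<in> (\<Union>j\<in>{1..s}. cover_set m lam vtx s p j) \<longleftrightarrow> lam i = 1"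
proof -
  have "vtx i \<in> (\<Union>j\<in>{1..s}. cover_set m lam vtx s p j) \<longleftrightarrow> (\<exists>j\<in>{1..s}. vtx i = vtx j)"
    by (auto simp: cover_set_def)
  also have "\<dots> \<longleftrightarrow> i \<le> s"
    using vtx_inj assms isolated_count_le by (auto dest: inj_onD)
  finally show ?thesis using label_eq_1_iff[OF assms] by simp
qed

end

locale prime_indexed_coding = coding_sequence +
  fixes k :: nat and p :: "nat \<Rightarrow> nat"
  assumes prime_index: "bij_betw p {1..k} (prime_factors (seq_lcm m lam))"
begin

abbreviation S :: "nat \<Rightarrow> 'a set" where
  "S \<equiv> cover_set m lam vtx s p"

lemma prime_index_prime: "j \<in> {1..k} \<Longrightarrow> prime (p j)"
  using bij_betwE[OF prime_index] by auto

lemma prime_divisor_of_label_indexed: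
  assumes "i \<in> {1..m}" "prime q" "q dvd lam i"
  obtains j where "j \<in> {1..k}" "q = p j"
proof -
  have "q \<in> prime_factors (lam i)"
    using assms label_pos by (auto simp: in_prime_factors_iff)
  then have "q \<in> prime_factors (seq_lcm m lam)"
    using prime_factors_label_subset[OF assms(1)] by blast
  then show ?thesis
    using that bij_betw_imp_surj_on[OF prime_index] by blast
qed

lemma cover_set_is_clique:
  assumes "j \<in> {1..s+k}"
  shows "is_clique V E (S j)"
proof (cases "j \<le> s")
  case True
  then show ?thesis
    using assms isolated_count_le vtx_image by (auto simp: is_clique_def cover_set_def)
next
  case False
  define t where "t = j - s"
  have t: "t \<in> {1..k}" "j = s + t"
    using assms False by (auto simp: t_def)
  have "E (vtx i) (vtx i')"
    if "i \<in> {1..m}" "i' \<in> {1..m}" "i \<noteq> i'" "p t dvd lam i" "p t dvd lam i'" for i i'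
    using that edge_iff prime_index_prime[OF t(1)] label_pos
      one_less_gcd_iff_common_prime_divisor by blast
  then show ?thesis
    using False t vtx_image by (fastforce simp: is_clique_def cover_set_def)
qed

lemma vertex_in_cover_set:
  assumes "x \<in> V"
  shows "\<exists>j\<in>{1..s+k}. x \<in> S j"
proof -
  obtain i where i: "i \<in> {1..m}" "x = vtx i" using assms vtx_image by auto
  show ?thesis
  proof (cases "i \<le> s")
    case True
    then show ?thesis using i by (auto simp: cover_set_def)
  next
    case False
    then have "lam i \<noteq> 1" using label_eq_1_iff[OF i(1)] by simp
    then obtain q where "prime q" "q dvd lam i" using prime_factor_nat by blast
    moreover obtain j where "j \<in> {1..k}" "q = p j"
      using prime_divisor_of_label_indexed[OF i(1) calculation] .
    ultimately show ?thesis
      using i vtx_in_cover_set_iff[of i j] by (intro bexI[of _ "s + j"]) auto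
  qed
qed

lemma edge_in_cover_set:
  assumes "simple_graph V E" "E x y"
  shows "\<exists>j\<in>{1..s+k}. x \<in> S j \<and> y \<in> S j"
proof -
  have "x \<in> V" "y \<in> V" using assms by (auto simp: simple_graph_def)
  then obtain i i' where i: "i \<in> {1..m}" "x = vtx i" "i' \<in> {1..m}" "y = vtx i'"
    using vtx_image by auto
  then have "1 < gcd (lam i) (lam i')" using edge_iff assms(2) by blast
  then obtain q where q: "prime q" "q dvd lam i" "q dvd lam i'"
    using one_less_gcd_iff_common_prime_divisor label_pos[OF i(1)] by blast
  obtain j where "j \<in> {1..k}" "q = p j"
    using prime_divisor_of_label_indexed[OF i(1) q(1,2)] .
  then show ?thesis
    using i q vtx_in_cover_set_iff by (intro bexI[of _ "s + j"]) auto
qed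

lemma total_clique_covering_cover_sets:
  assumes "simple_graph V E"
  shows "total_clique_covering V E (S ` {1..s+k})"
  unfolding total_clique_covering_def
proof (intro conjI)
  show "\<forall>C\<in>S ` {1..s+k}. is_clique V E C"
    using cover_set_is_clique by simp
  show "\<forall>x\<in>V. \<exists>C\<in>S ` {1..s+k}. x \<in> C"
    using vertex_in_cover_set by simp
  show "\<forall>x y. E x y \<longrightarrow> (\<exists>C\<in>S ` {1..s+k}. x \<in> C \<and> y \<in> C)"
    using edge_in_cover_set[OF assms] by simp
qed

lemma cover_pattern_iff_label_eq_prod:
  assumes "i \<in> {1..m}" "J \<subseteq> {1..k}"
  shows "((\<forall>j\<in>J. vtx i \<in> S (s + j)) \<and> (\<forall>j\<in>{1..k} - J. vtx i \<notin> S (s + j)))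
    \<longleftrightarrow> lam i = (\<Prod>j\<in>J. p j)"
proof -
  have "((\<forall>j\<in>J. vtx i \<in> S (s + j)) \<and> (\<forall>j\<in>{1..k} - J. vtx i \<notin> S (s + j)))
      \<longleftrightarrow> ((\<forall>j\<in>J. p j dvd lam i) \<and> (\<forall>j\<in>{1..k} - J. \<not> p j dvd lam i))"
  proof -
    have "\<forall>j\<in>{1..k}. vtx i \<in> S (s + j) \<longleftrightarrow> p j dvd lam i"
      using vtx_in_cover_set_iff[OF assms(1)] by auto
    then show ?thesis using assms(2) by blast
  qed
  also have "\<dots> \<longleftrightarrow> lam i = (\<Prod>j\<in>J. p j)"
  proof (rule squarefree_eq_prod_iff_prime_divisors)
    show "inj_on p {1..k}" "p ` {1..k} \<supseteq> prime_factors (lam i)"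
      using prime_index prime_factors_label_subset[OF assms(1)] by (auto simp: bij_betw_def)
  qed (use assms label_pos label_squarefree prime_index_prime in auto)
  finally show ?thesis .
qed

end

theorem lemma1:
  fixes V :: "'a set" and E :: "'a \<Rightarrow> 'a \<Rightarrow> bool"
    and m s k :: nat and lam :: "nat \<Rightarrow> nat" and vtx :: "nat \<Rightarrow> 'a" and p :: "nat \<Rightarrow> nat"
  assumes "simple_graph V E"
    and "coding_seq V E m lam vtx s"
    and "bij_betw p {1..k} (prime_factors (seq_lcm m lam))"
  shows "total_clique_covering V E (cover_set m lam vtx s p ` {1..s+k})
    \<and> (\<forall>i\<in>{1..m}. \<forall>J. J \<subseteq> {1..k} \<and> J \<noteq> {} \<longrightarrow>
           (((\<forall>j\<in>J. vtx i \<in> cover_set m lam vtx s p (s + j))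
              \<and> (\<forall>j\<in>{1..k} - J. vtx i \<notin> cover_set m lam vtx s p (s + j)))
            \<longleftrightarrow> lam i = (\<Prod>j\<in>J. p j)))
    \<and> (\<forall>i\<in>{1..m}. vtx i \<in> (\<Union>j\<in>{1..s}. cover_set m lam vtx s p j) \<longleftrightarrow> lam i = 1)"
proof -
  interpret prime_indexed_coding V E m lam vtx s k p
    using assms(2,3) by unfold_locales
  show ?thesis
    using total_clique_covering_cover_sets[OF assms(1)] cover_pattern_iff_label_eq_prod
      vtx_in_isolated_cover_sets_iff by simp
qed

end
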